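(* Let $\mathbf{X}=(X_n)_{n\ge0}$ be a second-order stationary process with covariance $\sigma_X(h)=h^{-\alpha}L(h)$ for $h\ge1$, where $0<\alpha<1$ and $L$ is slowly varying at infinity and ultimately monotone. Let $(T_n)_{n\ge0}$ be a random walk independent of $\mathbf{X}$ with $T_0=0$ and i.i.d. increments with law $S$ on $\{1,2,\dots\}$, and let $Y_n=X_{T_n}$ with covariance $\sigma_Y$. If $\mathbb{E}(T_1)<\infty$, then $$\sigma_Y(h)\sim h^{-\alpha}(\mathbb{E}(T_1))^{-\alpha}L(h)\quad\text{as }h\to\infty.$$ *)

theory Defs
  imports "HOL-Probability.Probability" "HOL-Library.Landau_Symbols"
begin

definition covariance :: "'a measure \<Rightarrow> ('a \<Rightarrow> real) \<Rightarrow> ('a \<Rightarrow> real) \<Rightarrow> real" where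
  "covariance M U V =
     (\<integral>\<omega>. (U \<omega> - (\<integral>\<omega>'. U \<omega>' \<partial>M)) * (V \<omega> - (\<integral>\<omega>'. V \<omega>' \<partial>M)) \<partial>M)"

definition slowly_varying :: "(real \<Rightarrow> real) \<Rightarrow> bool" where
  "slowly_varying L \<longleftrightarrow> L \<in> borel_measurable borel \<and>
     (\<forall>\<^sub>F x in at_top. L x > 0) \<and>
     (\<forall>c>0. ((\<lambda>x. L (c * x) / L x) \<longlongrightarrow> 1) at_top)"

definition ultimately_monotone :: "(real \<Rightarrow> real) \<Rightarrow> bool" where
  "ultimately_monotone L \<longleftrightarrow>
     (\<exists>x0. mono_on {x0..} L \<or> mono_on {x0..} (\<lambda>x. - L x))"

end

theory Submission
  imports Defs
begin

text \<open>
  Since the time change is independent of X, conditioning on it gives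
  Cov(Y_n, Y_{n+h}) = E[\<sigma>_X(W_h)], where W_h = T_{n+h} - T_n is a sum of h i.i.d. increments,
  each at least 1, so W_h \<ge> h. By a weak law of large numbers (truncation, with Hoeffding's
  inequality for the bounded part and Markov's inequality for the tail), W_h / h tends to
  E(T_1) in probability. Uniform convergence of L(w)/L(h) for w/h near E(T_1), available for
  ultimately monotone slowly varying L, turns this into convergence in probability of
  \<sigma>_X(W_h) / \<sigma>_X(h) to E(T_1)^{-\<alpha>}, and a Potter-type bound L(w) \<le> 2^\<alpha> (w/h)^\<alpha> L(h) for w \<ge> h
  keeps this ratio below 2^\<alpha>, so bounded convergence yields the asymptotics of the expectation.
\<close>

section \<open>Slowly varying functions\<close>

lemma ultimately_monotone_between:
  assumes "ultimately_monotone L"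
  obtains x0 where "\<And>a w b. x0 \<le> a \<Longrightarrow> a \<le> w \<Longrightarrow> w \<le> b \<Longrightarrow>
      min (L a) (L b) \<le> L w \<and> L w \<le> max (L a) (L b)"
proof -
  obtain x0 where "mono_on {x0..} L \<or> mono_on {x0..} (\<lambda>x. - L x)"
    using assms unfolding ultimately_monotone_def by auto
  then have "min (L a) (L b) \<le> L w \<and> L w \<le> max (L a) (L b)"
    if "x0 \<le> a" "a \<le> w" "w \<le> b" for a w b
    using that mono_onD[of "{x0..}" L] mono_onD[of "{x0..}" "\<lambda>x. - L x"]
    by (smt (verit, best) atLeast_iff)
  then show thesis using that by blast
qed

lemma mono_on_doubling_bound:
  fixes f :: "real \<Rightarrow> real"
  assumes mono: "mono_on {a..} f" and pos: "\<And>x. a \<le> x \<Longrightarrow> 0 < f x"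
    and doubling: "\<And>x. a \<le> x \<Longrightarrow> f (2 * x) \<le> 2 powr \<alpha> * f x"
    and "0 \<le> \<alpha>" "0 < a" "a \<le> h" "h \<le> w"
  shows "f w \<le> 2 powr \<alpha> * (w / h) powr \<alpha> * f h"
proof -
  have "f w \<le> 2 powr \<alpha> * (w / h) powr \<alpha> * f h" if "h \<le> w" "w \<le> 2 ^ k * h" for k w
    using that
  proof (induction k arbitrary: w)
    case 0
    then show ?case using pos[of h] \<open>0 < a\<close> \<open>a \<le> h\<close> \<open>0 \<le> \<alpha>\<close> by (simp add: ge_one_powr_ge_zero)
  next
    case (Suc k)
    have "1 \<le> (w / h) powr \<alpha>"
      using Suc.prems \<open>0 < a\<close> \<open>a \<le> h\<close> \<open>0 \<le> \<alpha>\<close> by (simp add: ge_one_powr_ge_zero)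
    then have "f h \<le> (w / h) powr \<alpha> * f h"
      using pos[of h] \<open>a \<le> h\<close> by (simp add: mult_le_cancel_right1)
    then have h_le_w: "2 powr \<alpha> * f h \<le> 2 powr \<alpha> * (w / h) powr \<alpha> * f h"
      by (simp add: mult.assoc)
    show ?case
    proof (cases "w \<le> 2 * h")
      case True
      have "f w \<le> f (2 * h)"
        using Suc.prems True \<open>a \<le> h\<close> by (intro mono_onD[OF mono]) auto
      also have "\<dots> \<le> 2 powr \<alpha> * f h" using doubling \<open>a \<le> h\<close> .
      also note h_le_w
      finally show ?thesis .
    next
      case False
      then have w2: "h \<le> w / 2" "w / 2 \<le> 2 ^ k * h" using Suc.prems by auto
      have "f w = f (2 * (w / 2))" by simp
      also have "\<dots> \<le> 2 powr \<alpha> * f (w / 2)" using doubling[of "w / 2"] w2 \<open>a \<le> h\<close> by simp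
      also have "\<dots> \<le> 2 powr \<alpha> * (2 powr \<alpha> * (w / 2 / h) powr \<alpha> * f h)"
        using Suc.IH[OF w2] by simp
      also have "2 powr \<alpha> * (w / 2 / h) powr \<alpha> = (w / h) powr \<alpha>"
        using w2 \<open>0 < a\<close> \<open>a \<le> h\<close> by (simp add: powr_divide powr_mult)
      finally show ?thesis by (simp add: mult_ac)
    qed
  qed
  moreover obtain k :: nat where "w / h < 2 ^ k" using real_arch_pow[of 2 "w / h"] by auto
  then have "w \<le> 2 ^ k * h" using \<open>0 < a\<close> \<open>a \<le> h\<close> by (simp add: field_simps)
  ultimately show ?thesis using \<open>h \<le> w\<close> by blast
qed

lemma slowly_varying_Potter_bound:
  assumes sv: "slowly_varying L" and um: "ultimately_monotone L" and "0 < \<alpha>"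
  obtains h0 where "0 < h0"
    "\<And>h w. h0 \<le> h \<Longrightarrow> h \<le> w \<Longrightarrow> 0 < L w \<and> L w \<le> 2 powr \<alpha> * (w / h) powr \<alpha> * L h"
proof -
  obtain x0 where pos: "\<And>x. x0 \<le> x \<Longrightarrow> 0 < L x"
    using sv unfolding slowly_varying_def eventually_at_top_linorder by auto
  have "((\<lambda>x. L (2 * x) / L x) \<longlongrightarrow> 1) at_top"
    using sv unfolding slowly_varying_def by simp
  moreover have "1 < 2 powr \<alpha>" using \<open>0 < \<alpha>\<close> by simp
  ultimately have "\<forall>\<^sub>F x in at_top. L (2 * x) / L x < 2 powr \<alpha>"
    by (rule order_tendstoD)
  then obtain x2 where x2: "\<And>x. x2 \<le> x \<Longrightarrow> L (2 * x) / L x < 2 powr \<alpha>"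
    unfolding eventually_at_top_linorder by auto
  obtain x1 where mono: "mono_on {x1..} L \<or> mono_on {x1..} (\<lambda>x. - L x)"
    using um unfolding ultimately_monotone_def by auto
  define h0 where "h0 = max 1 (max x0 (max x1 x2))"
  have h0_pos: "0 < h0" by (simp add: h0_def)
  have "L w \<le> 2 powr \<alpha> * (w / h) powr \<alpha> * L h" if hw: "h0 \<le> h" "h \<le> w" for h w
    using mono
  proof
    assume "mono_on {x1..} L"
    then have mono': "mono_on {h0..} L"
      by (rule mono_on_subset) (simp add: h0_def)
    have pos': "0 < L x" if "h0 \<le> x" for x
      using pos that by (simp add: h0_def)
    have doubling: "L (2 * x) \<le> 2 powr \<alpha> * L x" if "h0 \<le> x" for x
      using x2[of x] pos'[OF that] that by (simp add: h0_def divide_less_eq)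
    show ?thesis
      by (rule mono_on_doubling_bound[where f = L and a = h0])
        (use mono' pos' doubling hw \<open>0 < \<alpha>\<close> h0_pos in auto)
  next
    assume anti: "mono_on {x1..} (\<lambda>x. - L x)"
    have "- L h \<le> - L w" using hw by (intro mono_onD[OF anti]) (auto simp: h0_def)
    then have "L w \<le> L h" by simp
    also have "L h \<le> 2 powr \<alpha> * (w / h) powr \<alpha> * L h"
    proof -
      have "1 \<le> 2 powr \<alpha>" "1 \<le> (w / h) powr \<alpha>"
        using hw \<open>0 < \<alpha>\<close> by (auto simp: h0_def ge_one_powr_ge_zero)
      then have "1 \<le> 2 powr \<alpha> * (w / h) powr \<alpha>"
        using mult_mono[of 1 "2 powr \<alpha>" 1 "(w / h) powr \<alpha>"] by simp
      then show ?thesis using pos[of h] hw by (simp add: h0_def mult_le_cancel_right1)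
    qed
    finally show ?thesis .
  qed
  moreover have "0 < L w" if "h0 \<le> h" "h \<le> w" for h w
    using pos that by (simp add: h0_def)
  ultimately show thesis using that h0_pos by blast
qed

lemma regularly_varying_Potter_bound:
  fixes L :: "real \<Rightarrow> real"
  assumes sv: "slowly_varying L" and um: "ultimately_monotone L" and "0 < \<alpha>"
  obtains h0 where "0 < h0" "\<And>h w. h0 \<le> h \<Longrightarrow> h \<le> w \<Longrightarrow>
    0 \<le> w powr (-\<alpha>) * L w / (h powr (-\<alpha>) * L h) \<and> w powr (-\<alpha>) * L w / (h powr (-\<alpha>) * L h) \<le> 2 powr \<alpha>"
proof -
  obtain h0 where "0 < h0" and Potter:
    "\<And>h w. h0 \<le> h \<Longrightarrow> h \<le> w \<Longrightarrow> 0 < L w \<and> L w \<le> 2 powr \<alpha> * (w / h) powr \<alpha> * L h"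
    using slowly_varying_Potter_bound[OF sv um \<open>0 < \<alpha>\<close>] by blast
  have ratio_bound: "0 \<le> w powr (-\<alpha>) * L w / (h powr (-\<alpha>) * L h)
      \<and> w powr (-\<alpha>) * L w / (h powr (-\<alpha>) * L h) \<le> 2 powr \<alpha>" if hw: "h0 \<le> h" "h \<le> w" for h w
  proof -
    have "0 < h" using hw \<open>0 < h0\<close> by linarith
    have LW: "0 < L w" "L w \<le> 2 powr \<alpha> * (w / h) powr \<alpha> * L h" using Potter[OF hw] by auto
    have Lh: "0 < L h" using Potter[OF hw(1) order.refl] by simp
    have "w powr (-\<alpha>) * L w / (h powr (-\<alpha>) * L h) = (w / h) powr (-\<alpha>) * (L w / L h)"
      using \<open>0 < h\<close> hw by (simp add: powr_divide)
    also have "\<dots> \<le> (w / h) powr (-\<alpha>) * (2 powr \<alpha> * (w / h) powr \<alpha>)"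
      using LW Lh by (intro mult_left_mono) (simp_all add: divide_le_eq)
    also have "\<dots> = 2 powr \<alpha>"
      using \<open>0 < h\<close> hw by (simp add: powr_minus field_simps)
    finally show ?thesis using LW Lh \<open>0 < h\<close> hw by simp
  qed
  show thesis using that[OF \<open>0 < h0\<close> ratio_bound] .
qed

lemma slowly_varying_ratio_uniform:
  assumes sv: "slowly_varying L" and um: "ultimately_monotone L"
    and "0 < a" "a \<le> b" "0 < \<epsilon>"
  shows "\<forall>\<^sub>F x in at_top. \<forall>w. a * x \<le> w \<longrightarrow> w \<le> b * x \<longrightarrow> \<bar>L w / L x - 1\<bar> < \<epsilon>"
proof -
  obtain x0 where between: "\<And>a w b. x0 \<le> a \<Longrightarrow> a \<le> w \<Longrightarrow> w \<le> b \<Longrightarrow>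
      min (L a) (L b) \<le> L w \<and> L w \<le> max (L a) (L b)"
    using ultimately_monotone_between[OF um] by blast
  have ratio: "\<forall>\<^sub>F x in at_top. \<bar>L (c * x) / L x - 1\<bar> < \<epsilon>" if "0 < c" for c
  proof -
    have "((\<lambda>x. L (c * x) / L x) \<longlongrightarrow> 1) at_top"
      using sv that unfolding slowly_varying_def by simp
    from tendstoD[OF this \<open>0 < \<epsilon>\<close>] show ?thesis by (simp add: dist_real_def)
  qed
  have "0 < b" using \<open>0 < a\<close> \<open>a \<le> b\<close> by linarith
  have "\<forall>\<^sub>F x in at_top. x0 \<le> a * x"
    using \<open>0 < a\<close> by (intro eventually_at_top_linorderI[of "x0 / a"]) (simp add: field_simps)
  moreover have "\<forall>\<^sub>F x in at_top. 0 < L x"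
    using sv unfolding slowly_varying_def by simp
  ultimately show ?thesis
    using ratio[OF \<open>0 < a\<close>] ratio[OF \<open>0 < b\<close>]
  proof (eventually_elim, intro allI impI)
    fix x w assume x: "x0 \<le> a * x" "0 < L x" "\<bar>L (a * x) / L x - 1\<bar> < \<epsilon>"
      "\<bar>L (b * x) / L x - 1\<bar> < \<epsilon>" and w: "a * x \<le> w" "w \<le> b * x"
    have "min (L (a * x)) (L (b * x)) / L x \<le> L w / L x"
      "L w / L x \<le> max (L (a * x)) (L (b * x)) / L x"
      using between[OF x(1) w] x(2) by (auto intro: divide_right_mono)
    then show "\<bar>L w / L x - 1\<bar> < \<epsilon>"
      using x(3,4) unfolding min_def max_def abs_less_iff by (smt (verit))
  qed
qed

lemma regularly_varying_ratio_uniform: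
  fixes L :: "real \<Rightarrow> real"
  assumes sv: "slowly_varying L" and um: "ultimately_monotone L" and "0 < \<mu>" "0 < \<epsilon>"
  obtains \<delta> where "0 < \<delta>" "\<forall>\<^sub>F x in at_top. \<forall>w. \<bar>w - \<mu> * x\<bar> \<le> \<delta> * x \<longrightarrow>
      \<bar>w powr (-\<alpha>) * L w / (x powr (-\<alpha>) * L x) - \<mu> powr (-\<alpha>)\<bar> < \<epsilon>"
proof -
  define c where "c = \<mu> powr (-\<alpha>)"
  define \<epsilon>' where "\<epsilon>' = min 1 (\<epsilon> / (c + 2))"
  have c: "0 < c" using \<open>0 < \<mu>\<close> by (simp add: c_def)
  have "\<epsilon>' \<le> \<epsilon> / (c + 2)" by (simp add: \<epsilon>'_def)
  then have "\<epsilon>' * (c + 2) \<le> \<epsilon>" using c by (simp add: pos_le_divide_eq)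
  moreover have "0 < \<epsilon>'" "\<epsilon>' \<le> 1" using \<open>0 < \<epsilon>\<close> c by (simp_all add: \<epsilon>'_def)
  ultimately have \<epsilon>': "0 < \<epsilon>'" "\<epsilon>' \<le> 1" "\<epsilon>' * (c + 2) \<le> \<epsilon>" by simp_all
  have "isCont (\<lambda>y. y powr (-\<alpha>)) \<mu>"
    using \<open>0 < \<mu>\<close> by (intro continuous_intros) auto
  then obtain s where s: "0 < s" "\<And>y. \<bar>y - \<mu>\<bar> < s \<Longrightarrow> \<bar>y powr (-\<alpha>) - c\<bar> < \<epsilon>'"
    unfolding continuous_at_eps_delta dist_real_def c_def using \<epsilon>'(1) by blast
  define \<delta> where "\<delta> = min (s / 2) (\<mu> / 2)"
  have \<delta>: "0 < \<delta>" "\<delta> < s" "\<delta> \<le> \<mu> / 2" using s(1) \<open>0 < \<mu>\<close> by (auto simp: \<delta>_def)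
  have "\<forall>\<^sub>F x in at_top. \<forall>w. (\<mu> - \<delta>) * x \<le> w \<longrightarrow> w \<le> (\<mu> + \<delta>) * x \<longrightarrow> \<bar>L w / L x - 1\<bar> < \<epsilon>'"
    using \<delta> by (intro slowly_varying_ratio_uniform[OF sv um _ _ \<epsilon>'(1)]) auto
  then have "\<forall>\<^sub>F x in at_top. \<forall>w. \<bar>w - \<mu> * x\<bar> \<le> \<delta> * x \<longrightarrow>
      \<bar>w powr (-\<alpha>) * L w / (x powr (-\<alpha>) * L x) - c\<bar> < \<epsilon>"
    using eventually_gt_at_top[of 0]
  proof (eventually_elim, intro allI impI)
    fix x w assume x: "0 < x" and L_unif: "\<forall>w. (\<mu> - \<delta>) * x \<le> w \<longrightarrow> w \<le> (\<mu> + \<delta>) * x \<longrightarrow>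
      \<bar>L w / L x - 1\<bar> < \<epsilon>'" and w: "\<bar>w - \<mu> * x\<bar> \<le> \<delta> * x"
    define q where "q = w / x"
    define b where "b = L w / L x"
    have "\<bar>q - \<mu>\<bar> \<le> \<delta>" using w x by (simp add: q_def field_simps abs_le_iff)
    then have q: "\<bar>q powr (-\<alpha>) - c\<bar> < \<epsilon>'" using s(2) \<delta>(2) by simp
    have w_bounds: "(\<mu> - \<delta>) * x \<le> w" "w \<le> (\<mu> + \<delta>) * x"
      using w by (auto simp: abs_le_iff algebra_simps)
    have "0 < (\<mu> - \<delta>) * x" using \<delta>(3) \<open>0 < \<mu>\<close> x by simp
    then have "0 < w" using w_bounds(1) by linarith
    have b: "\<bar>b - 1\<bar> < \<epsilon>'" using L_unif w_bounds by (simp add: b_def)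
    have "\<bar>b\<bar> \<le> 2" using b \<epsilon>'(2) by linarith
    have "w powr (-\<alpha>) * L w / (x powr (-\<alpha>) * L x) = q powr (-\<alpha>) * b"
      using \<open>0 < w\<close> x by (simp add: q_def b_def powr_divide)
    also have "q powr (-\<alpha>) * b - c = (q powr (-\<alpha>) - c) * b + c * (b - 1)"
      by (simp add: algebra_simps)
    finally have "\<bar>w powr (-\<alpha>) * L w / (x powr (-\<alpha>) * L x) - c\<bar>
        \<le> \<bar>q powr (-\<alpha>) - c\<bar> * \<bar>b\<bar> + c * \<bar>b - 1\<bar>"
      using c by (simp add: abs_mult abs_triangle_ineq[THEN order_trans])
    also have "\<dots> < \<epsilon>' * 2 + c * \<epsilon>'"
      using q b c \<open>\<bar>b\<bar> \<le> 2\<close> by (intro add_le_less_mono mult_mono mult_strict_left_mono) simp_all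
    also have "\<dots> \<le> \<epsilon>" using \<epsilon>'(3) by (simp add: algebra_simps)
    finally show "\<bar>w powr (-\<alpha>) * L w / (x powr (-\<alpha>) * L x) - c\<bar> < \<epsilon>" .
  qed
  with \<delta>(1) show thesis using that unfolding c_def by blast
qed

section \<open>A weak law of large numbers for i.i.d. integer variables\<close>

lemma truncated_expectation_tendsto:
  fixes S :: "nat pmf"
  assumes "integrable (measure_pmf S) real"
  shows "(\<lambda>K. measure_pmf.expectation S (\<lambda>i. real (min i K)))
           \<longlonglongrightarrow> measure_pmf.expectation S real"
proof (rule integral_dominated_convergence[where w = real])
  show "AE i in measure_pmf S. (\<lambda>K. real (min i K)) \<longlonglongrightarrow> real i"
  proof (rule AE_I2)
    fix i :: nat
    have "\<forall>\<^sub>F K in sequentially. real (min i K) = real i"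
      using eventually_ge_at_top[of i] by eventually_elim simp
    then show "(\<lambda>K. real (min i K)) \<longlonglongrightarrow> real i" by (rule tendsto_eventually)
  qed
qed (use assms in auto)

context prob_space
begin

lemma
  fixes X :: "'a \<Rightarrow> nat" and S :: "nat pmf" and f :: "nat \<Rightarrow> real"
  assumes "X \<in> measurable M (count_space UNIV)" "distr M (count_space UNIV) X = measure_pmf S"
  shows expectation_distr_pmf: "expectation (\<lambda>\<omega>. f (X \<omega>)) = measure_pmf.expectation S f"
    and integrable_distr_pmf: "integrable (measure_pmf S) f \<Longrightarrow> integrable M (\<lambda>\<omega>. f (X \<omega>))"
  using integral_distr[OF assms(1), of f] integrable_distr_eq[OF assms(1), of f] assms(2) by simp_all

lemma iid_truncated_sum_Hoeffding:
  fixes D :: "'i \<Rightarrow> 'a \<Rightarrow> nat" and S :: "nat pmf" and I :: "'i set" and K :: nat and \<epsilon> :: real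
  assumes indep: "indep_vars (\<lambda>_. count_space UNIV) D UNIV"
    and law: "\<And>k. distr M (count_space UNIV) (D k) = measure_pmf S"
    and I: "finite I" "card I = h" "0 < h" and "0 < K" "0 \<le> \<epsilon>"
  shows "prob {\<omega>\<in>space M. \<epsilon> \<le> \<bar>(\<Sum>k\<in>I. real (min (D k \<omega>) K))
             - h * measure_pmf.expectation S (\<lambda>i. real (min i K))\<bar>}
           \<le> 2 * exp (- 2 * \<epsilon>\<^sup>2 / (h * K\<^sup>2))"
proof -
  have D_meas[measurable]: "D k \<in> measurable M (count_space UNIV)" for k
    using indep unfolding indep_vars_def by auto
  define Z where "Z k \<omega> = real (min (D k \<omega>) K)" for k \<omega>
  interpret Z: Hoeffding_ineq M I Z "\<lambda>_. 0" "\<lambda>_. real K" "\<Sum>k\<in>I. expectation (Z k)"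
  proof unfold_locales
    show "indep_vars (\<lambda>_. borel) Z I"
      unfolding Z_def
      by (rule indep_vars_compose2[OF indep_vars_subset[OF indep], where Y = "\<lambda>_ i. real (min i K)"])
        auto
  qed (auto simp: Z_def I)
  have "expectation (Z k) = measure_pmf.expectation S (\<lambda>i. real (min i K))" for k
    unfolding Z_def by (rule expectation_distr_pmf[OF D_meas law])
  moreover have "(\<Sum>i\<in>I. (real K - 0)\<^sup>2) = h * K\<^sup>2" using I by simp
  moreover have "0 < h * (real K)\<^sup>2" using I \<open>0 < K\<close> by simp
  ultimately show ?thesis
    using Z.Hoeffding_ineq_abs_ge[OF \<open>0 \<le> \<epsilon>\<close>] I by (simp add: Z_def)
qed

lemma truncation_tail_Markov:
  fixes D :: "'i \<Rightarrow> 'a \<Rightarrow> nat" and S :: "nat pmf" and I :: "'i set" and K :: nat and c :: real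
  assumes D_meas: "\<And>k. D k \<in> M \<rightarrow>\<^sub>M count_space UNIV"
    and law: "\<And>k. distr M (count_space UNIV) (D k) = measure_pmf S"
    and mean: "integrable (measure_pmf S) real"
    and I: "finite I" "card I = h" and "0 < c"
  shows "prob {\<omega>\<in>space M. c \<le> (\<Sum>k\<in>I. real (D k \<omega>) - real (min (D k \<omega>) K))}
           \<le> h * (measure_pmf.expectation S real - measure_pmf.expectation S (\<lambda>i. real (min i K))) / c"
proof -
  define E where "E k \<omega> = real (D k \<omega>) - real (min (D k \<omega>) K)" for k \<omega>
  have trunc_int: "integrable (measure_pmf S) (\<lambda>i. real (min i K))"
    by (rule measure_pmf.integrable_const_bound[where B = "real K"]) auto
  have E_int: "integrable M (E k)" for k
    unfolding E_def by (rule integrable_distr_pmf[OF D_meas law])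
      (intro Bochner_Integration.integrable_diff mean trunc_int)
  have "expectation (E k) = measure_pmf.expectation S (\<lambda>i. real i - real (min i K))" for k
    unfolding E_def by (rule expectation_distr_pmf[OF D_meas law])
  then have mean_tail: "expectation (\<lambda>\<omega>. \<Sum>k\<in>I. E k \<omega>)
      = h * (measure_pmf.expectation S real - measure_pmf.expectation S (\<lambda>i. real (min i K)))"
    using E_int I by (simp add: Bochner_Integration.integral_diff[OF mean trunc_int])
  have "prob {\<omega>\<in>space M. c \<le> (\<Sum>k\<in>I. E k \<omega>)} \<le> expectation (\<lambda>\<omega>. \<Sum>k\<in>I. E k \<omega>) / c"
    using \<open>0 < c\<close>
    by (intro integral_Markov_inequality_measure Bochner_Integration.integrable_sum E_int)
      (auto simp: E_def intro!: sum_nonneg)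
  then show ?thesis unfolding mean_tail by (simp add: E_def)
qed

lemma iid_nat_sum_deviation_bound:
  fixes D :: "'i \<Rightarrow> 'a \<Rightarrow> nat" and S :: "nat pmf" and I :: "'i set" and K :: nat
    and \<delta> :: real
  defines "\<mu> \<equiv> measure_pmf.expectation S real"
    and "\<mu>\<^sub>K \<equiv> measure_pmf.expectation S (\<lambda>i. real (min i K))"
  assumes indep: "indep_vars (\<lambda>_. count_space UNIV) D UNIV"
    and law: "\<And>k. distr M (count_space UNIV) (D k) = measure_pmf S"
    and mean: "integrable (measure_pmf S) real"
    and I: "finite I" "card I = h" "0 < h"
    and "0 < \<delta>" "0 < K" and truncation: "\<mu> - \<mu>\<^sub>K \<le> \<delta> / 2"
  shows "prob {\<omega>\<in>space M. \<delta> * h \<le> \<bar>real (\<Sum>k\<in>I. D k \<omega>) - h * \<mu>\<bar>}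
           \<le> 2 * exp (- \<delta>\<^sup>2 * h / (2 * K\<^sup>2)) + 2 * (\<mu> - \<mu>\<^sub>K) / \<delta>"
proof -
  have D_meas[measurable]: "\<And>k. D k \<in> M \<rightarrow>\<^sub>M count_space UNIV"
    using indep unfolding indep_vars_def by auto
  have "\<mu>\<^sub>K \<le> \<mu>"
    unfolding \<mu>_def \<mu>\<^sub>K_def
    by (intro integral_mono mean measure_pmf.integrable_const_bound[where B = "real K"]) auto
  define Z where "Z \<omega> = (\<Sum>k\<in>I. real (min (D k \<omega>) K))" for \<omega>
  define E where "E \<omega> = (\<Sum>k\<in>I. real (D k \<omega>) - real (min (D k \<omega>) K))" for \<omega>
  \<comment> \<open>Splitting each summand at level K gives a bounded part and a nonnegative tail whose
    mean is at most \<delta> h / 2, so a deviation of \<delta> h forces a deviation of \<delta> h / 2 in one of them.\<close>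
  have "{\<omega>\<in>space M. \<delta> * h \<le> \<bar>real (\<Sum>k\<in>I. D k \<omega>) - h * \<mu>\<bar>}
      \<subseteq> {\<omega>\<in>space M. \<delta> * h / 2 \<le> \<bar>Z \<omega> - h * \<mu>\<^sub>K\<bar>} \<union> {\<omega>\<in>space M. \<delta> * h / 2 \<le> E \<omega>}"
  proof safe
    fix \<omega> assume dev: "\<delta> * h \<le> \<bar>real (\<Sum>k\<in>I. D k \<omega>) - h * \<mu>\<bar>" and E_small: "\<not> \<delta> * h / 2 \<le> E \<omega>"
    have "real (\<Sum>k\<in>I. D k \<omega>) = Z \<omega> + E \<omega>"
      by (simp add: Z_def E_def sum.distrib[symmetric])
    moreover have "0 \<le> E \<omega>" by (auto simp: E_def intro!: sum_nonneg)
    moreover have "real h * \<mu> - real h * \<mu>\<^sub>K \<le> \<delta> * real h / 2"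
      using mult_left_mono[OF truncation, of "real h"] by (simp add: algebra_simps)
    moreover have "real h * \<mu>\<^sub>K \<le> real h * \<mu>"
      using \<open>\<mu>\<^sub>K \<le> \<mu>\<close> by (intro mult_left_mono) auto
    ultimately have "\<bar>real (\<Sum>k\<in>I. D k \<omega>) - h * \<mu>\<bar> < \<delta> * h" if "\<bar>Z \<omega> - h * \<mu>\<^sub>K\<bar> < \<delta> * h / 2"
      using E_small that unfolding abs_less_iff not_le by linarith
    with dev show "\<delta> * h / 2 \<le> \<bar>Z \<omega> - h * \<mu>\<^sub>K\<bar>" by (meson not_le)
  qed
  then have "prob {\<omega>\<in>space M. \<delta> * h \<le> \<bar>real (\<Sum>k\<in>I. D k \<omega>) - h * \<mu>\<bar>}
      \<le> prob {\<omega>\<in>space M. \<delta> * h / 2 \<le> \<bar>Z \<omega> - h * \<mu>\<^sub>K\<bar>} + prob {\<omega>\<in>space M. \<delta> * h / 2 \<le> E \<omega>}"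
    unfolding Z_def E_def
    by (rule finite_measure_mono[THEN order_trans], simp, intro measure_Un_le) measurable
  also have "prob {\<omega>\<in>space M. \<delta> * h / 2 \<le> \<bar>Z \<omega> - h * \<mu>\<^sub>K\<bar>} \<le> 2 * exp (- \<delta>\<^sup>2 * h / (2 * K\<^sup>2))"
    using iid_truncated_sum_Hoeffding[OF indep law I \<open>0 < K\<close>, of "\<delta> * h / 2"] \<open>0 < \<delta>\<close> I
    by (simp add: Z_def \<mu>\<^sub>K_def power2_eq_square field_simps)
  also have "prob {\<omega>\<in>space M. \<delta> * h / 2 \<le> E \<omega>} \<le> h * (\<mu> - \<mu>\<^sub>K) / (\<delta> * h / 2)"
    unfolding E_def \<mu>_def \<mu>\<^sub>K_def
    by (rule truncation_tail_Markov[where D = D, OF D_meas law mean I(1,2)]) (use \<open>0 < \<delta>\<close> I in simp)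
  also have "h * (\<mu> - \<mu>\<^sub>K) / (\<delta> * h / 2) = 2 * (\<mu> - \<mu>\<^sub>K) / \<delta>"
    using I by simp
  finally show ?thesis by simp
qed

lemma iid_nat_sum_deviation_tendsto_zero:
  fixes D :: "'i \<Rightarrow> 'a \<Rightarrow> nat" and S :: "nat pmf" and I :: "nat \<Rightarrow> 'i set"
    and \<delta> :: real
  assumes indep: "indep_vars (\<lambda>_. count_space UNIV) D UNIV"
    and law: "\<And>k. distr M (count_space UNIV) (D k) = measure_pmf S"
    and mean: "integrable (measure_pmf S) real"
    and I: "\<And>h. finite (I h)" "\<And>h. card (I h) = h" and "0 < \<delta>"
  shows "((\<lambda>h. prob {\<omega>\<in>space M. \<delta> * h \<le>
            \<bar>real (\<Sum>k\<in>I h. D k \<omega>) - h * measure_pmf.expectation S real\<bar>}) \<longlongrightarrow> 0) sequentially"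
proof (rule tendstoI)
  fix \<eta> :: real assume "0 < \<eta>"
  define \<mu> where "\<mu> = measure_pmf.expectation S real"
  define \<mu>\<^sub>K where "\<mu>\<^sub>K K = measure_pmf.expectation S (\<lambda>i. real (min i K))" for K
  define t where "t = min (\<delta> / 2) (\<eta> * \<delta> / 8)"
  have "0 < t" using \<open>0 < \<delta>\<close> \<open>0 < \<eta>\<close> by (simp add: t_def)
  have "\<forall>\<^sub>F K in sequentially. \<mu> - t < \<mu>\<^sub>K K"
    using truncated_expectation_tendsto[OF mean] \<open>0 < t\<close>
    unfolding \<mu>_def \<mu>\<^sub>K_def by (intro order_tendstoD(1)) auto
  with eventually_gt_at_top[of 0] have "\<forall>\<^sub>F K in sequentially. 0 < K \<and> \<mu> - \<mu>\<^sub>K K < t"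
    by eventually_elim auto
  then obtain K where "0 < K" "\<mu> - \<mu>\<^sub>K K < t"
    unfolding eventually_sequentially by (meson order_refl)
  then have trunc: "\<mu> - \<mu>\<^sub>K K \<le> \<delta> / 2" and "\<mu> - \<mu>\<^sub>K K < \<eta> * \<delta> / 4"
    using mult_pos_pos[OF \<open>0 < \<eta>\<close> \<open>0 < \<delta>\<close>] by (auto simp: t_def)
  then have tail: "2 * (\<mu> - \<mu>\<^sub>K K) / \<delta> < \<eta> / 2"
    using \<open>0 < \<delta>\<close> by (simp add: field_simps)
  define q where "q = \<delta>\<^sup>2 / (2 * (real K)\<^sup>2)"
  have "0 < q" using \<open>0 < \<delta>\<close> \<open>0 < K\<close> by (simp add: q_def)
  have "((\<lambda>h. 2 * exp (- q * real h)) \<longlongrightarrow> 2 * 0) sequentially"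
    using \<open>0 < q\<close> by (intro tendsto_intros filterlim_compose[OF exp_at_bot]
        filterlim_tendsto_neg_mult_at_bot[OF tendsto_const] filterlim_real_sequentially) auto
  then have "\<forall>\<^sub>F h in sequentially. 2 * exp (- q * real h) < \<eta> / 2"
    using \<open>0 < \<eta>\<close> by (intro order_tendstoD(2)[where y = 0]) auto
  with eventually_gt_at_top[of 0]
  show "\<forall>\<^sub>F h in sequentially. dist (prob {\<omega>\<in>space M. \<delta> * h \<le>
            \<bar>real (\<Sum>k\<in>I h. D k \<omega>) - h * measure_pmf.expectation S real\<bar>}) 0 < \<eta>"
  proof eventually_elim
    case (elim h)
    have "prob {\<omega>\<in>space M. \<delta> * h \<le> \<bar>real (\<Sum>k\<in>I h. D k \<omega>) - h * \<mu>\<bar>}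
        \<le> 2 * exp (- \<delta>\<^sup>2 * h / (2 * K\<^sup>2)) + 2 * (\<mu> - \<mu>\<^sub>K K) / \<delta>"
      unfolding \<mu>_def \<mu>\<^sub>K_def
      by (rule iid_nat_sum_deviation_bound[OF indep law mean I(1,2) elim(1) \<open>0 < \<delta>\<close> \<open>0 < K\<close>])
        (use trunc in \<open>simp add: \<mu>_def \<mu>\<^sub>K_def\<close>)
    also have "- \<delta>\<^sup>2 * h / (2 * K\<^sup>2) = - q * h" by (simp add: q_def)
    finally have "prob {\<omega>\<in>space M. \<delta> * h \<le> \<bar>real (\<Sum>k\<in>I h. D k \<omega>) - h * \<mu>\<bar>} < \<eta>"
      using elim(2) tail by linarith
    then show ?case by (simp add: \<mu>_def)
  qed
qed

end

lemma (in prob_space) AE_block_sum_ge: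
  fixes D :: "nat \<Rightarrow> 'a \<Rightarrow> nat" and S :: "nat pmf"
  assumes D_meas: "\<And>k. D k \<in> M \<rightarrow>\<^sub>M count_space UNIV"
    and law: "\<And>k. distr M (count_space UNIV) (D k) = measure_pmf S"
    and support: "set_pmf S \<subseteq> {1..}"
  shows "AE \<omega> in M. \<forall>h. h \<le> (\<Sum>k\<in>{n..<n + h}. D k \<omega>)"
proof -
  have "AE \<omega> in M. 1 \<le> D k \<omega>" for k
  proof -
    have "AE x in distr M (count_space UNIV) (D k). 1 \<le> x"
      unfolding law using support by (auto simp: AE_measure_pmf_iff)
    then show ?thesis using D_meas by (subst (asm) AE_distr_iff) auto
  qed
  then have "AE \<omega> in M. \<forall>k. 1 \<le> D k \<omega>" by (simp add: AE_all_countable)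
  then show ?thesis
  proof eventually_elim
    case (elim \<omega>)
    have "(\<Sum>k\<in>{n..<n + h}. 1) \<le> (\<Sum>k\<in>{n..<n + h}. D k \<omega>)" for h
      using elim by (intro sum_mono) auto
    then show ?case by simp
  qed
qed

section \<open>Stationary processes at independent random times\<close>

lemma (in prob_space) distr_pair_eq_pair_measure_if_indep_set:
  assumes indep: "indep_set (sets (vimage_algebra (space M) Y T)) (sets (vimage_algebra (space M) X S))"
    and rv: "random_variable S X" "random_variable T Y"
  shows "distr M (S \<Otimes>\<^sub>M T) (\<lambda>\<omega>. (X \<omega>, Y \<omega>)) = distr M S X \<Otimes>\<^sub>M distr M T Y"
proof -
  interpret PX: prob_space "distr M S X" by (rule prob_space_distr) fact
  interpret PY: prob_space "distr M T Y" by (rule prob_space_distr) fact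
  interpret PXY: pair_prob_space "distr M S X" "distr M T Y" ..
  show ?thesis
  proof (rule pair_measure_eqI[symmetric])
    fix A B assume A: "A \<in> sets (distr M S X)" and B: "B \<in> sets (distr M T Y)"
    have "(\<lambda>\<omega>. (X \<omega>, Y \<omega>)) -` (A \<times> B) \<inter> space M = (Y -` B \<inter> space M) \<inter> (X -` A \<inter> space M)"
      by auto
    moreover have "prob ((Y -` B \<inter> space M) \<inter> (X -` A \<inter> space M))
        = prob (Y -` B \<inter> space M) * prob (X -` A \<inter> space M)"
      using A B by (intro indep_setD[OF indep] in_vimage_algebra) auto
    ultimately show "emeasure (distr M S X) A * emeasure (distr M T Y) B
        = emeasure (distr M (S \<Otimes>\<^sub>M T) (\<lambda>\<omega>. (X \<omega>, Y \<omega>))) (A \<times> B)"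
      using rv A B
      by (simp add: emeasure_distr measurable_Pair emeasure_eq_measure measure_nonneg ennreal_mult
          mult.commute)
  qed (simp_all add: PX.sigma_finite_measure PY.sigma_finite_measure)
qed

lemma (in prob_space) indep_set_integral_iterated:
  fixes \<Phi> :: "'s \<times> 't \<Rightarrow> real"
  assumes indep: "indep_set (sets (vimage_algebra (space M) Y T)) (sets (vimage_algebra (space M) X S))"
    and rv[measurable]: "random_variable S X" "random_variable T Y"
    and \<Phi>[measurable]: "\<Phi> \<in> borel_measurable (S \<Otimes>\<^sub>M T)"
    and bound: "\<And>x. x \<in> space S \<Longrightarrow> (\<integral>y. \<bar>\<Phi> (x, y)\<bar> \<partial>distr M T Y) \<le> B"
    and int: "\<And>x. x \<in> space S \<Longrightarrow> integrable (distr M T Y) (\<lambda>y. \<Phi> (x, y))"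
  shows "integrable M (\<lambda>\<omega>. \<Phi> (X \<omega>, Y \<omega>))"
    and "expectation (\<lambda>\<omega>. \<Phi> (X \<omega>, Y \<omega>)) = (\<integral>x. (\<integral>y. \<Phi> (x, y) \<partial>distr M T Y) \<partial>distr M S X)"
proof -
  have joint: "distr M S X \<Otimes>\<^sub>M distr M T Y = distr M (S \<Otimes>\<^sub>M T) (\<lambda>\<omega>. (X \<omega>, Y \<omega>))"
    using distr_pair_eq_pair_measure_if_indep_set[OF indep rv] by simp
  interpret PX: prob_space "distr M S X" by (rule prob_space_distr) simp
  interpret PY: prob_space "distr M T Y" by (rule prob_space_distr) simp
  interpret PXY: pair_prob_space "distr M S X" "distr M T Y" ..
  have \<Phi>': "\<Phi> \<in> borel_measurable (distr M S X \<Otimes>\<^sub>M distr M T Y)"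
    unfolding joint by simp
  have "integrable (distr M S X \<Otimes>\<^sub>M distr M T Y) \<Phi>"
  proof (rule PXY.Fubini_integrable[OF \<Phi>'])
    have "(\<lambda>x. \<integral>y. norm (\<Phi> (x, y)) \<partial>distr M T Y) \<in> borel_measurable (distr M S X)"
      by (rule PY.borel_measurable_lebesgue_integral) (use \<Phi>' in measurable)
    then show "integrable (distr M S X) (\<lambda>x. \<integral>y. norm (\<Phi> (x, y)) \<partial>distr M T Y)"
      using bound by (intro PX.integrable_const_bound[where B = B]) auto
    show "AE x in distr M S X. integrable (distr M T Y) (\<lambda>y. \<Phi> (x, y))"
      using int by auto
  qed
  then have int_joint: "integrable (distr M (S \<Otimes>\<^sub>M T) (\<lambda>\<omega>. (X \<omega>, Y \<omega>))) \<Phi>"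
    unfolding joint .
  then show "integrable M (\<lambda>\<omega>. \<Phi> (X \<omega>, Y \<omega>))"
    by (subst (asm) integrable_distr_eq) simp_all
  have "expectation (\<lambda>\<omega>. \<Phi> (X \<omega>, Y \<omega>)) = integral\<^sup>L (distr M (S \<Otimes>\<^sub>M T) (\<lambda>\<omega>. (X \<omega>, Y \<omega>))) \<Phi>"
    by (subst integral_distr) simp_all
  also have "\<dots> = (\<integral>x. (\<integral>y. \<Phi> (x, y) \<partial>distr M T Y) \<partial>distr M S X)"
    unfolding joint[symmetric] using int_joint[folded joint] by (rule PXY.integral_fst'[symmetric])
  finally show "expectation (\<lambda>\<omega>. \<Phi> (X \<omega>, Y \<omega>)) = (\<integral>x. (\<integral>y. \<Phi> (x, y) \<partial>distr M T Y) \<partial>distr M S X)" .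
qed

lemma abs_mult_le_sum_squares: "\<bar>a * b\<bar> \<le> a\<^sup>2 + (b::real)\<^sup>2"
proof -
  have "0 \<le> (\<bar>a\<bar> - \<bar>b\<bar>)\<^sup>2" by simp
  then have "2 * (\<bar>a\<bar> * \<bar>b\<bar>) \<le> a\<^sup>2 + b\<^sup>2" by (simp add: power2_eq_square algebra_simps)
  moreover have "0 \<le> \<bar>a\<bar> * \<bar>b\<bar>" by simp
  ultimately have "\<bar>a\<bar> * \<bar>b\<bar> \<le> a\<^sup>2 + b\<^sup>2" by linarith
  then show ?thesis by (simp add: abs_mult)
qed

lemma abs_le_square_plus: "\<bar>x\<bar> \<le> 1 + (x - m)\<^sup>2 + \<bar>m::real\<bar>"
proof -
  have "\<bar>x - m\<bar> \<le> 1 + (x - m)\<^sup>2"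
  proof (cases "\<bar>x - m\<bar> \<le> 1")
    case False
    then have "\<bar>x - m\<bar> * 1 \<le> \<bar>x - m\<bar> * \<bar>x - m\<bar>" by (intro mult_left_mono) auto
    then show ?thesis by (simp add: power2_eq_square)
  qed (simp add: add_increasing2)
  then show ?thesis by linarith
qed

locale second_order_stationary = prob_space +
  fixes X :: "nat \<Rightarrow> 'a \<Rightarrow> real" and \<sigma> :: "nat \<Rightarrow> real"
  assumes X_meas[measurable]: "\<And>n. X n \<in> borel_measurable M"
    and X_L2: "\<And>n. integrable M (\<lambda>\<omega>. (X n \<omega>)\<^sup>2)"
    and X_mean: "\<And>n. expectation (X n) = expectation (X 0)"
    and X_cov: "\<And>n h. covariance M (X n) (X (n + h)) = \<sigma> h"
begin

abbreviation mean :: real where "mean \<equiv> expectation (X 0)"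

abbreviation path_space :: "(nat \<Rightarrow> real) measure" where
  "path_space \<equiv> Pi\<^sub>M UNIV (\<lambda>_. borel)"

lemma integrable_X: "integrable M (X n)"
  by (rule square_integrable_imp_integrable[OF X_meas X_L2])

lemma integrable_centered_square: "integrable M (\<lambda>\<omega>. (X n \<omega> - mean)\<^sup>2)"
proof -
  have "integrable M (\<lambda>\<omega>. (X n \<omega>)\<^sup>2 - 2 * mean * X n \<omega> + mean\<^sup>2)"
    using X_L2 integrable_X by auto
  then show ?thesis by (simp add: power2_diff algebra_simps)
qed

lemma expectation_centered_product:
  assumes "j \<le> k"
  shows "expectation (\<lambda>\<omega>. (X j \<omega> - mean) * (X k \<omega> - mean)) = \<sigma> (k - j)"
  using X_cov[of j "k - j"] assms X_mean[of j] X_mean[of k] unfolding covariance_def by simp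

lemma expectation_centered_square: "expectation (\<lambda>\<omega>. (X n \<omega> - mean)\<^sup>2) = \<sigma> 0"
  using expectation_centered_product[of n n] by (simp add: power2_eq_square)

lemma integrable_centered_product: "integrable M (\<lambda>\<omega>. (X j \<omega> - mean) * (X k \<omega> - mean))"
  by (rule Bochner_Integration.integrable_bound[where f = "\<lambda>\<omega>. (X j \<omega> - mean)\<^sup>2 + (X k \<omega> - mean)\<^sup>2"])
    (use integrable_centered_square abs_mult_le_sum_squares in auto)

lemma expectation_abs_centered_product_le:
  "expectation (\<lambda>\<omega>. \<bar>(X j \<omega> - mean) * (X k \<omega> - mean)\<bar>) \<le> 2 * \<sigma> 0"
proof -
  have "expectation (\<lambda>\<omega>. \<bar>(X j \<omega> - mean) * (X k \<omega> - mean)\<bar>)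
      \<le> expectation (\<lambda>\<omega>. (X j \<omega> - mean)\<^sup>2 + (X k \<omega> - mean)\<^sup>2)"
    by (intro integral_mono integrable_abs integrable_centered_product)
      (use integrable_centered_square abs_mult_le_sum_squares in auto)
  also have "\<dots> = 2 * \<sigma> 0"
    using integrable_centered_square expectation_centered_square by simp
  finally show ?thesis .
qed

lemma expectation_abs_X_le: "expectation (\<lambda>\<omega>. \<bar>X n \<omega>\<bar>) \<le> 1 + \<sigma> 0 + \<bar>mean\<bar>"
proof -
  have "expectation (\<lambda>\<omega>. \<bar>X n \<omega>\<bar>) \<le> expectation (\<lambda>\<omega>. 1 + (X n \<omega> - mean)\<^sup>2 + \<bar>mean\<bar>)"
    by (intro integral_mono integrable_abs integrable_X)
      (use integrable_centered_square abs_le_square_plus in auto)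
  also have "\<dots> = 1 + \<sigma> 0 + \<bar>mean\<bar>"
    using integrable_centered_square expectation_centered_square by (simp add: prob_space)
  finally show ?thesis .
qed

lemma random_variable_path: "random_variable path_space (\<lambda>\<omega> n. X n \<omega>)"
  by (rule measurable_PiM_single') simp_all

lemma expectation_at_random_time:
  fixes V :: "'a \<Rightarrow> 'v" and t :: "'v \<Rightarrow> nat"
  assumes indep: "indep_set (sets (vimage_algebra (space M) (\<lambda>\<omega> n. X n \<omega>) path_space))
      (sets (vimage_algebra (space M) V N))"
    and V[measurable]: "random_variable N V" and t[measurable]: "t \<in> N \<rightarrow>\<^sub>M count_space UNIV"
  shows "expectation (\<lambda>\<omega>. X (t (V \<omega>)) \<omega>) = mean"
proof -
  let ?P = "distr M path_space (\<lambda>\<omega> n. X n \<omega>)"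
  have path_integral: "(\<integral>x. f x \<partial>?P) = expectation (\<lambda>\<omega>. f (\<lambda>n. X n \<omega>))"
    if "f \<in> borel_measurable path_space" for f :: "(nat \<Rightarrow> real) \<Rightarrow> real"
    using integral_distr[OF random_variable_path that] .
  have "(\<lambda>p. snd p (t (fst p))) \<in> borel_measurable (N \<Otimes>\<^sub>M path_space)"
    by (rule measurable_compose_countable[OF _ measurable_compose[OF measurable_fst t]]) simp
  then have "expectation (\<lambda>\<omega>. X (t (V \<omega>)) \<omega>) = (\<integral>v. expectation (X (t v)) \<partial>distr M N V)"
    using indep_set_integral_iterated(2)[OF indep V random_variable_path,
        where \<Phi> = "\<lambda>p. snd p (t (fst p))" and B = "1 + \<sigma> 0 + \<bar>mean\<bar>"]
      path_integral expectation_abs_X_le integrable_X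
    by (simp add: integrable_distr_eq[OF random_variable_path])
  also have "\<dots> = (\<integral>v. mean \<partial>distr M N V)"
    by (rule Bochner_Integration.integral_cong[OF refl X_mean])
  also have "\<dots> = mean"
    using prob_space.prob_space[OF prob_space_distr[OF V]] by simp
  finally show ?thesis .
qed

lemma covariance_at_random_times:
  fixes V :: "'a \<Rightarrow> 'v" and t t' :: "'v \<Rightarrow> nat"
  assumes indep: "indep_set (sets (vimage_algebra (space M) (\<lambda>\<omega> n. X n \<omega>) path_space))
      (sets (vimage_algebra (space M) V N))"
    and V[measurable]: "random_variable N V"
    and t[measurable]: "t \<in> N \<rightarrow>\<^sub>M count_space UNIV" and t'[measurable]: "t' \<in> N \<rightarrow>\<^sub>M count_space UNIV"
    and le: "\<And>v. t v \<le> t' v"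
  shows "covariance M (\<lambda>\<omega>. X (t (V \<omega>)) \<omega>) (\<lambda>\<omega>. X (t' (V \<omega>)) \<omega>)
           = expectation (\<lambda>\<omega>. \<sigma> (t' (V \<omega>) - t (V \<omega>)))"
proof -
  let ?P = "distr M path_space (\<lambda>\<omega> n. X n \<omega>)"
  have path_integral: "(\<integral>x. f x \<partial>?P) = expectation (\<lambda>\<omega>. f (\<lambda>n. X n \<omega>))"
    if "f \<in> borel_measurable path_space" for f :: "(nat \<Rightarrow> real) \<Rightarrow> real"
    using integral_distr[OF random_variable_path that] .
  define \<Phi> where "\<Phi> p = (snd p (t (fst p)) - mean) * (snd p (t' (fst p)) - mean)"
    for p :: "'v \<times> (nat \<Rightarrow> real)"
  have coord: "(\<lambda>p. snd p (s (fst p))) \<in> borel_measurable (N \<Otimes>\<^sub>M path_space)"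
    if "s \<in> N \<rightarrow>\<^sub>M count_space UNIV" for s
    by (rule measurable_compose_countable[OF _ measurable_compose[OF measurable_fst that]]) simp
  have "\<Phi> \<in> borel_measurable (N \<Otimes>\<^sub>M path_space)"
    unfolding \<Phi>_def using coord[OF t] coord[OF t'] by measurable
  then have "expectation (\<lambda>\<omega>. \<Phi> (V \<omega>, \<lambda>n. X n \<omega>))
      = (\<integral>v. expectation (\<lambda>\<omega>. (X (t v) \<omega> - mean) * (X (t' v) \<omega> - mean)) \<partial>distr M N V)"
    using indep_set_integral_iterated(2)[OF indep V random_variable_path,
        where \<Phi> = \<Phi> and B = "2 * \<sigma> 0"]
      path_integral expectation_abs_centered_product_le integrable_centered_product
    by (simp add: \<Phi>_def integrable_distr_eq[OF random_variable_path])
  also have "\<dots> = (\<integral>v. \<sigma> (t' v - t v) \<partial>distr M N V)"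
    using le by (intro Bochner_Integration.integral_cong refl expectation_centered_product)
  also have "\<dots> = expectation (\<lambda>\<omega>. \<sigma> (t' (V \<omega>) - t (V \<omega>)))"
    by (rule integral_distr) measurable
  finally show ?thesis
    unfolding covariance_def expectation_at_random_time[OF indep V t]
      expectation_at_random_time[OF indep V t'] by (simp add: \<Phi>_def)
qed

end

lemma (in second_order_stationary) covariance_subordinated:
  fixes D :: "nat \<Rightarrow> 'a \<Rightarrow> nat"
  assumes indep: "indep_set (sets (vimage_algebra (space M) (\<lambda>\<omega> n. X n \<omega>) path_space))
      (sets (vimage_algebra (space M) (\<lambda>\<omega> n. D n \<omega>) (Pi\<^sub>M UNIV (\<lambda>_. count_space UNIV))))"
    and D_meas[measurable]: "\<And>k. D k \<in> M \<rightarrow>\<^sub>M count_space UNIV"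
  shows "covariance M (\<lambda>\<omega>. X (\<Sum>k<n. D k \<omega>) \<omega>) (\<lambda>\<omega>. X (\<Sum>k<n + h. D k \<omega>) \<omega>)
           = expectation (\<lambda>\<omega>. \<sigma> (\<Sum>k\<in>{n..<n + h}. D k \<omega>))"
proof -
  have "random_variable (Pi\<^sub>M UNIV (\<lambda>_. count_space UNIV)) (\<lambda>\<omega> n. D n \<omega>)"
    by (rule measurable_PiM_single') simp_all
  moreover have "(\<Sum>k<n + h. d k) = (\<Sum>k<n. d k) + (\<Sum>k\<in>{n..<n + h}. d k)" for d :: "nat \<Rightarrow> nat"
    by (induction h) auto
  ultimately show ?thesis
    using covariance_at_random_times[OF indep, where t = "\<lambda>d. \<Sum>k<n. d k" and t' = "\<lambda>d. \<Sum>k<n + h. d k"]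
    by (simp add: sum_mono2)
qed

section \<open>Asymptotics of the subordinated covariance\<close>

lemma (in prob_space) expectation_tendsto_if_bounded_in_probability:
  fixes R :: "'i \<Rightarrow> 'a \<Rightarrow> real"
  assumes meas: "\<And>i. R i \<in> borel_measurable M"
    and bounded: "\<forall>\<^sub>F i in F. AE \<omega> in M. \<bar>R i \<omega>\<bar> \<le> C"
    and in_prob: "\<And>\<epsilon>. 0 < \<epsilon> \<Longrightarrow> ((\<lambda>i. prob {\<omega>\<in>space M. \<epsilon> \<le> \<bar>R i \<omega> - c\<bar>}) \<longlongrightarrow> 0) F"
  shows "((\<lambda>i. expectation (R i)) \<longlongrightarrow> c) F"
proof (rule tendstoI)
  fix e :: real assume "0 < e"
  define K where "K = \<bar>C\<bar> + \<bar>c\<bar> + 1"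
  have K: "0 < K" by (simp add: K_def add_nonneg_pos)
  have "\<forall>\<^sub>F i in F. prob {\<omega>\<in>space M. e / 2 \<le> \<bar>R i \<omega> - c\<bar>} < e / (2 * K)"
    using order_tendstoD(2)[OF in_prob, of "e / 2" "e / (2 * K)"] \<open>0 < e\<close> K by simp
  with bounded show "\<forall>\<^sub>F i in F. dist (expectation (R i)) c < e"
  proof eventually_elim
    case (elim i)
    define bad where "bad = {\<omega>\<in>space M. e / 2 \<le> \<bar>R i \<omega> - c\<bar>}"
    have bad: "bad \<in> events" unfolding bad_def using meas by measurable
    have int: "integrable M (R i)"
      using elim(1) meas by (intro integrable_const_bound[where B = C]) auto
    have pointwise: "AE \<omega> in M. \<bar>R i \<omega> - c\<bar> \<le> e / 2 + K * indicator bad \<omega>"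
      using elim(1) AE_space
    proof eventually_elim
      case (elim \<omega>)
      then show ?case using \<open>0 < e\<close> by (auto simp: bad_def K_def indicator_def)
    qed
    have "dist (expectation (R i)) c = \<bar>expectation (\<lambda>\<omega>. R i \<omega> - c)\<bar>"
      using int by (simp add: dist_real_def prob_space)
    also have "\<dots> \<le> expectation (\<lambda>\<omega>. \<bar>R i \<omega> - c\<bar>)" by (rule integral_abs_bound)
    also have "\<dots> \<le> expectation (\<lambda>\<omega>. e / 2 + K * indicator bad \<omega>)"
      using int bad pointwise by (intro integral_mono_AE) (auto simp: emeasure_eq_measure)
    also have "\<dots> = e / 2 + K * prob bad"
      using bad by (subst Bochner_Integration.integral_add)
        (auto simp: emeasure_eq_measure prob_space Int_absorb2 sets.sets_into_space)
    also have "\<dots> < e / 2 + K * (e / (2 * K))"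
      using elim(2) K unfolding bad_def[symmetric] by (intro add_strict_left_mono mult_strict_left_mono)
    also have "\<dots> = e" using K by simp
    finally show ?case .
  qed
qed

lemma (in prob_space) regularly_varying_ratio_tendsto_in_probability:
  fixes W :: "nat \<Rightarrow> 'a \<Rightarrow> nat" and L :: "real \<Rightarrow> real" and \<alpha> \<mu> \<epsilon> :: real
  assumes sv: "slowly_varying L" and um: "ultimately_monotone L" and "0 < \<mu>" "0 < \<epsilon>"
    and W_meas[measurable]: "\<And>h. W h \<in> M \<rightarrow>\<^sub>M count_space UNIV"
    and concentrated: "\<And>\<delta> :: real. 0 < \<delta> \<Longrightarrow>
      ((\<lambda>h. prob {\<omega>\<in>space M. \<delta> * h \<le> \<bar>real (W h \<omega>) - h * \<mu>\<bar>}) \<longlongrightarrow> 0) sequentially"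
  shows "((\<lambda>h. prob {\<omega>\<in>space M. \<epsilon> \<le>
      \<bar>real (W h \<omega>) powr (-\<alpha>) * L (W h \<omega>) / (real h powr (-\<alpha>) * L h) - \<mu> powr (-\<alpha>)\<bar>})
        \<longlongrightarrow> 0) sequentially"
proof -
  obtain \<delta> where "0 < \<delta>" and unif: "\<forall>\<^sub>F x in at_top. \<forall>w. \<bar>w - \<mu> * x\<bar> \<le> \<delta> * x \<longrightarrow>
      \<bar>w powr (-\<alpha>) * L w / (x powr (-\<alpha>) * L x) - \<mu> powr (-\<alpha>)\<bar> < \<epsilon>"
    using regularly_varying_ratio_uniform[OF sv um \<open>0 < \<mu>\<close> \<open>0 < \<epsilon>\<close>] by blast
  have "\<forall>\<^sub>F h in sequentially.
      {\<omega>\<in>space M. \<epsilon> \<le> \<bar>real (W h \<omega>) powr (-\<alpha>) * L (W h \<omega>) / (real h powr (-\<alpha>) * L h) - \<mu> powr (-\<alpha>)\<bar>}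
        \<subseteq> {\<omega>\<in>space M. \<delta> * h \<le> \<bar>real (W h \<omega>) - h * \<mu>\<bar>}"
    using eventually_compose_filterlim[OF unif filterlim_real_sequentially]
  proof (eventually_elim, safe)
    fix h \<omega> assume close_ratio: "\<forall>w. \<bar>w - \<mu> * real h\<bar> \<le> \<delta> * real h \<longrightarrow>
        \<bar>w powr (-\<alpha>) * L w / (real h powr (-\<alpha>) * L h) - \<mu> powr (-\<alpha>)\<bar> < \<epsilon>"
      and far: "\<epsilon> \<le> \<bar>real (W h \<omega>) powr (-\<alpha>) * L (W h \<omega>) / (real h powr (-\<alpha>) * L h) - \<mu> powr (-\<alpha>)\<bar>"
    show "\<delta> * h \<le> \<bar>real (W h \<omega>) - h * \<mu>\<bar>"
    proof (rule ccontr)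
      assume "\<not> \<delta> * h \<le> \<bar>real (W h \<omega>) - h * \<mu>\<bar>"
      then have "\<bar>real (W h \<omega>) - \<mu> * h\<bar> \<le> \<delta> * h" by (simp add: mult.commute)
      with close_ratio far show False by auto
    qed
  qed
  then have "\<forall>\<^sub>F h in sequentially.
      prob {\<omega>\<in>space M. \<epsilon> \<le> \<bar>real (W h \<omega>) powr (-\<alpha>) * L (W h \<omega>) / (real h powr (-\<alpha>) * L h) - \<mu> powr (-\<alpha>)\<bar>}
        \<le> prob {\<omega>\<in>space M. \<delta> * h \<le> \<bar>real (W h \<omega>) - h * \<mu>\<bar>}"
    by eventually_elim (rule finite_measure_mono; measurable)
  then show ?thesis
    by (intro tendsto_sandwich[OF _ _ tendsto_const concentrated[OF \<open>0 < \<delta>\<close>]]) auto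
qed

lemma (in prob_space) expectation_regularly_varying_concentrated:
  fixes W :: "nat \<Rightarrow> 'a \<Rightarrow> nat" and L :: "real \<Rightarrow> real" and \<alpha> \<mu> :: real
  assumes sv: "slowly_varying L" and um: "ultimately_monotone L" and "0 < \<alpha>" "0 < \<mu>"
    and W_meas[measurable]: "\<And>h. W h \<in> M \<rightarrow>\<^sub>M count_space UNIV"
    and W_ge: "AE \<omega> in M. \<forall>h. h \<le> W h \<omega>"
    and concentrated: "\<And>\<delta> :: real. 0 < \<delta> \<Longrightarrow>
      ((\<lambda>h. prob {\<omega>\<in>space M. \<delta> * h \<le> \<bar>real (W h \<omega>) - h * \<mu>\<bar>}) \<longlongrightarrow> 0) sequentially"
  shows "((\<lambda>h. expectation (\<lambda>\<omega>. real (W h \<omega>) powr (-\<alpha>) * L (W h \<omega>)) / (real h powr (-\<alpha>) * L h))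
           \<longlongrightarrow> \<mu> powr (-\<alpha>)) sequentially"
proof -
  define R where "R h \<omega> = real (W h \<omega>) powr (-\<alpha>) * L (W h \<omega>) / (real h powr (-\<alpha>) * L h)" for h \<omega>
  have R_meas: "R h \<in> borel_measurable M" for h
    unfolding R_def by (rule measurable_compose[OF W_meas]) simp
  obtain h0 where "0 < h0" and ratio_bound: "\<And>h w. h0 \<le> h \<Longrightarrow> h \<le> w \<Longrightarrow>
      0 \<le> w powr (-\<alpha>) * L w / (h powr (-\<alpha>) * L h) \<and> w powr (-\<alpha>) * L w / (h powr (-\<alpha>) * L h) \<le> 2 powr \<alpha>"
    using regularly_varying_Potter_bound[OF sv um \<open>0 < \<alpha>\<close>] by blast
  have "((\<lambda>h. expectation (R h)) \<longlongrightarrow> \<mu> powr (-\<alpha>)) sequentially"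
  proof (rule expectation_tendsto_if_bounded_in_probability[OF R_meas])
    have "\<forall>\<^sub>F h in sequentially. h0 \<le> real h"
      using filterlim_real_sequentially by (simp add: filterlim_at_top)
    then show "\<forall>\<^sub>F h in sequentially. AE \<omega> in M. \<bar>R h \<omega>\<bar> \<le> 2 powr \<alpha>"
    proof eventually_elim
      case (elim h)
      show ?case
        using W_ge
      proof eventually_elim
        case (elim \<omega>)
        then have "real h \<le> real (W h \<omega>)" by simp
        then have "0 \<le> R h \<omega> \<and> R h \<omega> \<le> 2 powr \<alpha>"
          unfolding R_def by (rule ratio_bound[OF \<open>h0 \<le> real h\<close>])
        then show ?case by (simp add: abs_le_iff)
      qed
    qed
  qed (unfold R_def, rule regularly_varying_ratio_tendsto_in_probability[OF sv um \<open>0 < \<mu>\<close> _ W_meas concentrated])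
  moreover have "expectation (R h)
      = expectation (\<lambda>\<omega>. real (W h \<omega>) powr (-\<alpha>) * L (W h \<omega>)) / (real h powr (-\<alpha>) * L h)" for h
    unfolding R_def by (rule integral_divide_zero)
  ultimately show ?thesis by simp
qed

lemma asymp_equiv_if_ratio_tendsto:
  fixes f g b :: "'a \<Rightarrow> real"
  assumes "((\<lambda>x. g x / b x) \<longlongrightarrow> c) F" "c \<noteq> 0" "\<forall>\<^sub>F x in F. f x = g x"
  shows "f \<sim>[F] (\<lambda>x. b x * c)"
proof (rule asymp_equivI')
  have "((\<lambda>x. g x / b x / c) \<longlongrightarrow> c / c) F" by (rule tendsto_divide[OF assms(1) tendsto_const \<open>c \<noteq> 0\<close>])
  moreover have "\<forall>\<^sub>F x in F. g x / b x / c = f x / (b x * c)"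
    using assms(3) by eventually_elim simp
  ultimately show "((\<lambda>x. f x / (b x * c)) \<longlongrightarrow> 1) F"
    using \<open>c \<noteq> 0\<close> by (auto intro: Lim_transform_eventually)
qed

lemma (in second_order_stationary) covariance_subordinated_asymp_equiv:
  fixes D :: "nat \<Rightarrow> 'a \<Rightarrow> nat" and S :: "nat pmf" and L :: "real \<Rightarrow> real" and \<alpha> :: real
  assumes \<sigma>_regular: "\<And>h. 1 \<le> h \<Longrightarrow> \<sigma> h = real h powr (-\<alpha>) * L h"
    and sv: "slowly_varying L" and um: "ultimately_monotone L" and "0 < \<alpha>"
    and D_iid: "indep_vars (\<lambda>_. count_space UNIV) D UNIV"
    and law: "\<And>k. distr M (count_space UNIV) (D k) = measure_pmf S"
    and support: "set_pmf S \<subseteq> {1..}" and mean: "integrable (measure_pmf S) real"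
    and indep: "indep_set (sets (vimage_algebra (space M) (\<lambda>\<omega> n. X n \<omega>) path_space))
      (sets (vimage_algebra (space M) (\<lambda>\<omega> n. D n \<omega>) (Pi\<^sub>M UNIV (\<lambda>_. count_space UNIV))))"
  shows "(\<lambda>h. covariance M (\<lambda>\<omega>. X (\<Sum>k<n. D k \<omega>) \<omega>) (\<lambda>\<omega>. X (\<Sum>k<n + h. D k \<omega>) \<omega>))
           \<sim>[at_top] (\<lambda>h. real h powr (-\<alpha>) * L h * measure_pmf.expectation S real powr (-\<alpha>))"
proof -
  have D_meas[measurable]: "\<And>k. D k \<in> M \<rightarrow>\<^sub>M count_space UNIV"
    using D_iid unfolding indep_vars_def by auto
  define \<mu> where "\<mu> = measure_pmf.expectation S real"
  have "1 \<le> \<mu>"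
    using support mean unfolding \<mu>_def
    by (intro measure_pmf.integral_ge_const) (auto simp: AE_measure_pmf_iff)
  define W where "W h \<omega> = (\<Sum>k\<in>{n..<n + h}. D k \<omega>)" for h \<omega>
  have W_meas[measurable]: "W h \<in> M \<rightarrow>\<^sub>M count_space UNIV" for h
    unfolding W_def by measurable
  have W_ge: "AE \<omega> in M. \<forall>h. h \<le> W h \<omega>"
    unfolding W_def by (rule AE_block_sum_ge[OF D_meas law support])
  have concentrated: "((\<lambda>h. prob {\<omega>\<in>space M. \<delta> * h \<le> \<bar>real (W h \<omega>) - h * \<mu>\<bar>}) \<longlongrightarrow> 0) sequentially"
    if "0 < \<delta>" for \<delta> :: real
    unfolding W_def \<mu>_def
    by (rule iid_nat_sum_deviation_tendsto_zero[OF D_iid law mean _ _ that]) simp_all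
  have "0 < \<mu>" using \<open>1 \<le> \<mu>\<close> by simp
  have \<sigma>_W: "AE \<omega> in M. \<sigma> (W h \<omega>) = real (W h \<omega>) powr (-\<alpha>) * L (W h \<omega>)" if "1 \<le> h" for h
    using W_ge
  proof eventually_elim
    case (elim \<omega>)
    then have "1 \<le> W h \<omega>" using that order.trans by blast
    then show ?case by (rule \<sigma>_regular)
  qed
  have "\<forall>\<^sub>F h in sequentially.
      covariance M (\<lambda>\<omega>. X (\<Sum>k<n. D k \<omega>) \<omega>) (\<lambda>\<omega>. X (\<Sum>k<n + h. D k \<omega>) \<omega>)
        = expectation (\<lambda>\<omega>. real (W h \<omega>) powr (-\<alpha>) * L (W h \<omega>))"
    using eventually_ge_at_top[of 1]
  proof eventually_elim
    case (elim h)
    show ?case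
      unfolding covariance_subordinated[OF indep D_meas] W_def[symmetric]
      by (rule integral_cong_AE) (use \<sigma>_W[OF elim] in simp_all)
  qed
  with expectation_regularly_varying_concentrated[OF sv um \<open>0 < \<alpha>\<close> \<open>0 < \<mu>\<close> W_meas W_ge concentrated]
  show ?thesis
    unfolding \<mu>_def[symmetric] using \<open>0 < \<mu>\<close> by (intro asymp_equiv_if_ratio_tendsto) simp_all
qed

theorem proposition3p1:
  fixes M :: "'w measure"
    and X :: "nat \<Rightarrow> 'w \<Rightarrow> real"
    and D :: "nat \<Rightarrow> 'w \<Rightarrow> nat"
    and T :: "nat \<Rightarrow> 'w \<Rightarrow> nat"
    and S :: "nat pmf"
    and \<sigma>X :: "nat \<Rightarrow> real"
    and L :: "real \<Rightarrow> real"
    and \<alpha> :: real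
  assumes P: "prob_space M"
    and X_meas: "\<And>n. X n \<in> borel_measurable M"
    and X_L2: "\<And>n. integrable M (\<lambda>\<omega>. (X n \<omega>)\<^sup>2)"
    and X_mean: "\<And>n. (\<integral>\<omega>. X n \<omega> \<partial>M) = (\<integral>\<omega>. X 0 \<omega> \<partial>M)"
    and X_cov: "\<And>n h. covariance M (X n) (X (n + h)) = \<sigma>X h"
    and \<sigma>X_def: "\<And>h. h \<ge> 1 \<Longrightarrow> \<sigma>X h = real h powr (-\<alpha>) * L (real h)"
    and \<alpha>: "0 < \<alpha>" "\<alpha> < 1"
    and L_sv: "slowly_varying L"
    and L_mono: "ultimately_monotone L"
    and S_supp: "set_pmf S \<subseteq> {1..}"
    and D_iid: "prob_space.indep_vars M (\<lambda>_. count_space UNIV) D UNIV"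
    and D_law: "\<And>k. distr M (count_space UNIV) (D k) = measure_pmf S"
    and T_def: "\<And>n \<omega>. T n \<omega> = (\<Sum>k<n. D k \<omega>)"
    and indep: "prob_space.indep_set M
                  (sets (vimage_algebra (space M) (\<lambda>\<omega> n. X n \<omega>) (Pi\<^sub>M UNIV (\<lambda>_. borel))))
                  (sets (vimage_algebra (space M) (\<lambda>\<omega> n. D n \<omega>) (Pi\<^sub>M UNIV (\<lambda>_. count_space (UNIV :: nat set)))))"
    and ET1: "integrable M (\<lambda>\<omega>. real (T 1 \<omega>))"
  shows "\<forall>n. (\<lambda>h::nat. covariance M (\<lambda>\<omega>. X (T n \<omega>) \<omega>) (\<lambda>\<omega>. X (T (n + h) \<omega>) \<omega>))
           \<sim>[at_top] (\<lambda>h. real h powr (-\<alpha>) * (\<integral>\<omega>. real (T 1 \<omega>) \<partial>M) powr (-\<alpha>) * L (real h))"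
proof
  fix n
  interpret second_order_stationary M X \<sigma>X
    by (intro second_order_stationary.intro second_order_stationary_axioms.intro P X_meas X_L2 X_mean
        X_cov)
  have D_meas: "D 0 \<in> M \<rightarrow>\<^sub>M count_space UNIV"
    using D_iid unfolding indep_vars_def by auto
  have mean: "integrable (measure_pmf S) real"
    using ET1 integrable_distr_eq[OF D_meas, of real] D_law[of 0] by (simp add: T_def)
  have "expectation (\<lambda>\<omega>. real (T 1 \<omega>)) = measure_pmf.expectation S real"
    using expectation_distr_pmf[OF D_meas D_law] by (simp add: T_def)
  moreover have "T = (\<lambda>m \<omega>. \<Sum>k<m. D k \<omega>)" using T_def by auto
  ultimately show "(\<lambda>h. covariance M (\<lambda>\<omega>. X (T n \<omega>) \<omega>) (\<lambda>\<omega>. X (T (n + h) \<omega>) \<omega>))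
      \<sim>[at_top] (\<lambda>h. real h powr (-\<alpha>) * (\<integral>\<omega>. real (T 1 \<omega>) \<partial>M) powr (-\<alpha>) * L (real h))"
    using covariance_subordinated_asymp_equiv[OF \<sigma>X_def L_sv L_mono \<alpha>(1) D_iid D_law S_supp mean indep]
    by (simp add: mult_ac)
qed

end
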